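(* Let $K$ be a field of characteristic $p>0$. Then $\{\partial^{[\alpha]}\mid\alpha\in\mathbb{N}^n\}$ is the only iterative $(-\mathrm{ad}(x_1),\ldots,-\mathrm{ad}(x_n))$-descent in $\mathcal{D}(P_n)$ indexed by $\mathbb{N}^n$.
   Context: $P_n=K[x_1,\ldots,x_n]$, $\partial_i^{[k]}=\partial_i^k/k!$ acting on $P_n$ by $\partial_i^{[k]}(x^m)=\binom{m_i}{k}x^{m-ke_i}$, $\partial^{[\alpha]}=\prod_i\partial_i^{[\alpha_i]}$; $\mathcal{D}(P_n)=\bigoplus_\alpha P_n\partial^{[\alpha]}\subseteq\mathrm{End}_K(P_n)$ is the ring of differential operators; $\mathrm{ad}(a)(b)=ab-ba$. For commuting derivations $\delta=(\delta_1,\ldots,\delta_n)$ of a ring $A$, a family $\{y^{[\alpha]}\mid\alpha\in\mathbb{N}^n\}$ is an iterative $\delta$-descent if $y^{[0]}=1$, $y^{[\alpha]}y^{[\beta]}=\binom{\alpha+\beta}{\beta}y^{[\alpha+\beta]}$ (multi-binomial coefficient $\prod_i\binom{\alpha_i+\beta_i}{\beta_i}$ taken in $\mathbb{F}_p$) and $\delta_1^{\alpha_1}\cdots\delta_n^{\alpha_n}(y^{[\beta]})=y^{[\beta-\alpha]}$ for all $\alpha,\beta\in\mathbb{N}^n$, with $y^{[\gamma]}=0$ for $\gamma\notin\mathbb{N}^n$. *)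

theory Defs
  imports Main "HOL-Library.Poly_Mapping"
begin

text \<open>Monomials/multi-indices in the variables indexed by the finite type 'n
  (so n = CARD('n)) are finitely supported maps from 'n to nat;
  P_n = K[x_1,...,x_n] is the ring of finitely supported maps from monomials to K.\<close>

type_synonym ('n, 'k) pn = "('n \<Rightarrow>\<^sub>0 nat) \<Rightarrow>\<^sub>0 'k"

type_synonym ('n, 'k) op = "('n, 'k) pn \<Rightarrow> ('n, 'k) pn"

definition var :: "'n \<Rightarrow> ('n, 'k::field) pn" where
  "var i = Poly_Mapping.single (Poly_Mapping.single i 1) 1"

definition mle :: "('n \<Rightarrow>\<^sub>0 nat) \<Rightarrow> ('n \<Rightarrow>\<^sub>0 nat) \<Rightarrow> bool" where
  "mle a b \<longleftrightarrow> (\<forall>i. Poly_Mapping.lookup a i \<le> Poly_Mapping.lookup b i)"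

definition mbinom :: "('n::finite \<Rightarrow>\<^sub>0 nat) \<Rightarrow> ('n \<Rightarrow>\<^sub>0 nat) \<Rightarrow> nat" where
  "mbinom a b = (\<Prod>i\<in>UNIV. Poly_Mapping.lookup a i choose Poly_Mapping.lookup b i)"

definition dpow :: "('n::finite \<Rightarrow>\<^sub>0 nat) \<Rightarrow> ('n, 'k::field) op" where
  "dpow \<alpha> f = (\<Sum>m\<in>Poly_Mapping.keys f.
      if mle \<alpha> m then Poly_Mapping.single (m - \<alpha>) (of_nat (mbinom m \<alpha>) * Poly_Mapping.lookup f m) else 0)"

definition Dops :: "('n::finite, 'k::field) op set" where
  "Dops = {T. \<exists>S c. finite S \<and> T = (\<lambda>f. \<Sum>\<alpha>\<in>S. c \<alpha> * dpow \<alpha> f)}"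

definition mad :: "'n \<Rightarrow> ('n, 'k::field) op \<Rightarrow> ('n, 'k) op" where
  "mad i b = (\<lambda>f. b (var i * f) - var i * b f)"

text \<open>delta^alpha = delta_1^alpha_1 o ... o delta_n^alpha_n, the product taken along a fixed
  enumeration of the (finite) index type.\<close>
definition var_list :: "'n::finite list" where
  "var_list = (SOME xs. distinct xs \<and> set xs = UNIV)"

definition mad_pow :: "('n::finite \<Rightarrow>\<^sub>0 nat) \<Rightarrow> ('n, 'k::field) op \<Rightarrow> ('n, 'k) op" where
  "mad_pow \<alpha> = foldr (\<lambda>i g. (mad i ^^ Poly_Mapping.lookup \<alpha> i) \<circ> g) var_list id"

text \<open>y^[beta - alpha], with the convention y^[gamma] = 0 for gamma not in N^n.\<close>
definition yshift :: "(('n \<Rightarrow>\<^sub>0 nat) \<Rightarrow> ('n, 'k::field) op) \<Rightarrow> ('n \<Rightarrow>\<^sub>0 nat) \<Rightarrow> ('n \<Rightarrow>\<^sub>0 nat) \<Rightarrow> ('n, 'k) op" where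
  "yshift y \<beta> \<alpha> = (if mle \<alpha> \<beta> then y (\<beta> - \<alpha>) else (\<lambda>f. 0))"

definition iter_descent :: "(('n::finite \<Rightarrow>\<^sub>0 nat) \<Rightarrow> ('n, 'k::field) op) \<Rightarrow> bool" where
  "iter_descent y \<longleftrightarrow>
     (\<forall>\<alpha>. y \<alpha> \<in> Dops) \<and>
     y 0 = id \<and>
     (\<forall>\<alpha> \<beta>. y \<alpha> \<circ> y \<beta> = (\<lambda>f. of_nat (mbinom (\<alpha> + \<beta>) \<beta>) * y (\<alpha> + \<beta>) f)) \<and>
     (\<forall>\<alpha> \<beta>. mad_pow \<alpha> (y \<beta>) = yshift y \<beta> \<alpha>)"

end

theory Submission
  imports Defs
begin

text \<open>The divided powers satisfy the descent relations by a computation on monomials: the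
  multi-binomial coefficients compose as required, and -ad(x_i) acts on \<partial>^[\<beta>] by Pascal's rule,
  lowering \<beta>_i by one.

  Uniqueness is by induction on |\<beta>|. If y^[\<beta> - e_i] = \<partial>^[\<beta> - e_i] for all i, then
  y^[\<beta>] - \<partial>^[\<beta>] commutes with every x_i and is therefore multiplication by a polynomial c.
  Multiplicativity of the descent makes (y^[\<beta>])^p a multiple of y^[p\<beta>] by a binomial
  coefficient divisible by p, hence zero. But if c \<noteq> 0, then (\<partial>^[\<beta>] + c)^k 1 \<noteq> 0 for all k,
  because \<partial>^[\<beta>] strictly lowers a suitable monomial weight while the leading term of c^k survives.\<close>

lemma poly_mapping_eq_sum_single:
  fixes f :: "'a \<Rightarrow>\<^sub>0 'b::comm_monoid_add"
  shows "f = (\<Sum>a\<in>Poly_Mapping.keys f. Poly_Mapping.single a (Poly_Mapping.lookup f a))"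
  by (rule poly_mapping_eqI)
     (auto simp: lookup_sum lookup_single when_def in_keys_iff intro: sum.neutral)

lemma lookup_single_mult_add:
  fixes f :: "('n \<Rightarrow>\<^sub>0 nat) \<Rightarrow>\<^sub>0 'k::comm_semiring_1"
  shows "Poly_Mapping.lookup (Poly_Mapping.single a c * f) (a + q) = c * Poly_Mapping.lookup f q"
  by (simp add: lookup_mult lookup_single when_mult)

lemma lookup_single_mult_eq_0:
  fixes f :: "('n \<Rightarrow>\<^sub>0 nat) \<Rightarrow>\<^sub>0 'k::comm_semiring_1"
  assumes "\<And>q. k \<noteq> a + q"
  shows "Poly_Mapping.lookup (Poly_Mapping.single a c * f) k = 0"
  using assms by (simp add: lookup_mult lookup_single when_mult)

lemma lookup_of_nat_mult:
  fixes f :: "('n \<Rightarrow>\<^sub>0 nat) \<Rightarrow>\<^sub>0 'k::comm_semiring_1"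
  shows "Poly_Mapping.lookup (of_nat n * f) q = of_nat n * Poly_Mapping.lookup f q"
  using lookup_single_mult_add[of 0 "of_nat n" f q] by simp

lemma lookup_var_mult_add:
  "Poly_Mapping.lookup (var i * f) (m + Poly_Mapping.single i 1) = Poly_Mapping.lookup f m"
  unfolding var_def by (metis add.commute lookup_single_mult_add mult_1)

lemma lookup_var_mult_eq_0:
  assumes "Poly_Mapping.lookup m i = 0"
  shows "Poly_Mapping.lookup (var i * f) m = 0"
  unfolding var_def using assms
  by (intro lookup_single_mult_eq_0) (auto simp: lookup_add)

lemma poly_mapping_eq_diff_single_add:
  fixes k :: "'n \<Rightarrow>\<^sub>0 nat"
  assumes "Poly_Mapping.lookup k i \<noteq> 0"
  shows "k = (k - Poly_Mapping.single i 1) + Poly_Mapping.single i 1"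
  using assms by (simp add: poly_mapping_eq_iff fun_eq_iff lookup_add lookup_minus lookup_single when_def)

lemma sum_lookup_add_single:
  fixes m :: "'n::finite \<Rightarrow>\<^sub>0 nat"
  shows "sum (Poly_Mapping.lookup (m + Poly_Mapping.single i 1)) UNIV = Suc (sum (Poly_Mapping.lookup m) UNIV)"
  by (simp add: lookup_add sum.distrib lookup_single when_def)

lemma mbinom_remove:
  "mbinom a c = (Poly_Mapping.lookup a i choose Poly_Mapping.lookup c i) *
     (\<Prod>j\<in>UNIV - {i}. Poly_Mapping.lookup a j choose Poly_Mapping.lookup c j)"
  unfolding mbinom_def by (rule prod.remove) auto

lemma mbinom_eq_0:
  assumes "Poly_Mapping.lookup a i < Poly_Mapping.lookup c i"
  shows "mbinom a c = 0"
  using assms by (simp add: mbinom_remove[of _ _ i])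

lemma mbinom_add_single:
  "mbinom (a + Poly_Mapping.single i 1) c = mbinom a c +
     (if Poly_Mapping.lookup c i \<noteq> 0 then mbinom a (c - Poly_Mapping.single i 1) else 0)"
proof -
  define rest where "rest = (\<Prod>j\<in>UNIV - {i}. Poly_Mapping.lookup a j choose Poly_Mapping.lookup c j)"
  have rest_add: "(\<Prod>j\<in>UNIV - {i}. Poly_Mapping.lookup (a + Poly_Mapping.single i 1) j choose
      Poly_Mapping.lookup c j) = rest"
    unfolding rest_def by (rule prod.cong) (simp_all add: lookup_add lookup_single)
  have rest_diff: "(\<Prod>j\<in>UNIV - {i}. Poly_Mapping.lookup a j choose
      Poly_Mapping.lookup (c - Poly_Mapping.single i 1) j) = rest"
    unfolding rest_def by (rule prod.cong) (simp_all add: lookup_minus lookup_single)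
  show ?thesis
    unfolding mbinom_remove[of _ _ i] rest_add rest_diff rest_def[symmetric]
    by (cases "Poly_Mapping.lookup c i") (simp_all add: lookup_add lookup_minus algebra_simps)
qed

lemma mbinom_mult:
  "mbinom (k + \<alpha>) \<alpha> * mbinom (k + \<alpha> + \<beta>) \<beta> = mbinom (\<alpha> + \<beta>) \<beta> * mbinom (k + \<alpha> + \<beta>) (\<alpha> + \<beta>)"
proof -
  have "(K + a choose a) * (K + a + b choose b) = (a + b choose b) * (K + a + b choose (a + b))"
    for K a b :: nat
    using choose_mult[of b "a + b" "K + a + b"] by (simp add: ac_simps)
  then show ?thesis
    unfolding mbinom_def prod.distrib[symmetric] by (simp add: lookup_add)
qed

lemma dvd_choose_mult:
  assumes "0 < b"
  shows "p dvd (p * b choose b)"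
proof -
  have "b * (p * b choose b) = b * (p * ((p * b - 1) choose (b - 1)))"
    using times_binomial_minus1_eq[OF assms, of "p * b"] by (simp add: ac_simps)
  then show ?thesis
    using assms by simp
qed

lemma lookup_dpow:
  "Poly_Mapping.lookup (dpow \<alpha> f) k = of_nat (mbinom (k + \<alpha>) \<alpha>) * Poly_Mapping.lookup f (k + \<alpha>)"
proof -
  have diff_eq_iff: "m - \<alpha> = k \<longleftrightarrow> m = k + \<alpha>" if "mle \<alpha> m" for m
    using that by (auto simp: mle_def poly_mapping_eq_iff fun_eq_iff lookup_add lookup_minus)
      (metis le_add_diff_inverse2)
  have "Poly_Mapping.lookup (dpow \<alpha> f) k =
     (\<Sum>m\<in>Poly_Mapping.keys f. if m = k + \<alpha> then of_nat (mbinom m \<alpha>) * Poly_Mapping.lookup f m else 0)"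
    unfolding dpow_def lookup_sum
    by (rule sum.cong) (auto simp: lookup_single when_def diff_eq_iff mle_def lookup_add)
  also have "\<dots> = of_nat (mbinom (k + \<alpha>) \<alpha>) * Poly_Mapping.lookup f (k + \<alpha>)"
    by (cases "k + \<alpha> \<in> Poly_Mapping.keys f") (auto simp: in_keys_iff)
  finally show ?thesis .
qed

lemma dpow_add: "dpow \<alpha> (f + g) = dpow \<alpha> f + dpow \<alpha> g"
  by (rule poly_mapping_eqI) (simp add: lookup_dpow lookup_add algebra_simps)

lemma dpow_single_0_mult:
  "dpow \<alpha> (Poly_Mapping.single 0 c * f) = Poly_Mapping.single 0 c * dpow \<alpha> f"
  by (rule poly_mapping_eqI)
     (simp only: lookup_dpow lookup_single_mult_add[of 0, simplified] mult.left_commute)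

lemma dpow_0: "dpow 0 = id"
  by (rule ext, rule poly_mapping_eqI) (simp add: lookup_dpow mbinom_def)

lemma dpow_in_Dops: "dpow \<alpha> \<in> Dops"
  unfolding Dops_def by (intro CollectI exI[of _ "{\<alpha>}"] exI[of _ "\<lambda>_. 1"] conjI) simp_all

lemma dpow_dpow: "dpow \<alpha> (dpow \<beta> f) = of_nat (mbinom (\<alpha> + \<beta>) \<beta>) * dpow (\<alpha> + \<beta>) f"
proof (rule poly_mapping_eqI)
  fix k
  have "Poly_Mapping.lookup (dpow \<alpha> (dpow \<beta> f)) k =
     of_nat (mbinom (k + \<alpha>) \<alpha> * mbinom (k + \<alpha> + \<beta>) \<beta>) * Poly_Mapping.lookup f (k + \<alpha> + \<beta>)"
    by (simp add: lookup_dpow)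
  also have "\<dots> = Poly_Mapping.lookup (of_nat (mbinom (\<alpha> + \<beta>) \<beta>) * dpow (\<alpha> + \<beta>) f) k"
    by (simp only: mbinom_mult) (simp add: lookup_of_nat_mult lookup_dpow add.assoc)
  finally show "Poly_Mapping.lookup (dpow \<alpha> (dpow \<beta> f)) k =
      Poly_Mapping.lookup (of_nat (mbinom (\<alpha> + \<beta>) \<beta>) * dpow (\<alpha> + \<beta>) f) k" .
qed

lemma mad_dpow_add_single:
  fixes \<beta> :: "'n::finite \<Rightarrow>\<^sub>0 nat"
  shows "mad i (dpow (\<beta> + Poly_Mapping.single i 1) :: ('n, 'k::field) op) = dpow \<beta>"
proof (intro ext poly_mapping_eqI)
  fix f :: "('n, 'k) pn" and k
  define e :: "'n \<Rightarrow>\<^sub>0 nat" where "e = Poly_Mapping.single i 1"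
  have var_e: "Poly_Mapping.lookup (var i * g) (m + e) = Poly_Mapping.lookup g m" for g :: "('n, 'k) pn" and m
    unfolding e_def by (rule lookup_var_mult_add)
  have pascal: "mbinom (m + e) (\<beta> + e) = mbinom m (\<beta> + e) + mbinom m \<beta>" for m
    using mbinom_add_single[of m i "\<beta> + e"] by (simp add: e_def lookup_add)
  have lhs: "Poly_Mapping.lookup (mad i (dpow (\<beta> + e)) f) k =
      of_nat (mbinom (k + \<beta> + e) (\<beta> + e)) * Poly_Mapping.lookup f (k + \<beta>)
      - Poly_Mapping.lookup (var i * dpow (\<beta> + e) f) k"
    by (simp add: mad_def lookup_minus lookup_dpow add.assoc[symmetric] var_e)
  have "Poly_Mapping.lookup (mad i (dpow (\<beta> + e)) f) k = Poly_Mapping.lookup (dpow \<beta> f) k"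
  proof (cases "Poly_Mapping.lookup k i = 0")
    case True
    have "mbinom (k + \<beta>) (\<beta> + e) = 0"
      by (rule mbinom_eq_0[of _ i]) (simp add: True lookup_add e_def)
    then show ?thesis
      using True by (simp add: lhs pascal lookup_dpow lookup_var_mult_eq_0)
  next
    case False
    define k' where "k' = k - e"
    have k: "k = k' + e"
      unfolding k'_def e_def by (rule poly_mapping_eq_diff_single_add[OF False])
    define m where "m = k' + (\<beta> + e)"
    have km: "k + \<beta> = m"
      by (simp add: m_def k ac_simps)
    have "Poly_Mapping.lookup (var i * dpow (\<beta> + e) f) k = of_nat (mbinom m (\<beta> + e)) * Poly_Mapping.lookup f m"
      by (simp add: k m_def var_e lookup_dpow)
    then have "Poly_Mapping.lookup (mad i (dpow (\<beta> + e)) f) k =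
        of_nat (mbinom (m + e) (\<beta> + e)) * Poly_Mapping.lookup f m
        - of_nat (mbinom m (\<beta> + e)) * Poly_Mapping.lookup f m"
      by (simp add: lhs km)
    also have "\<dots> = of_nat (mbinom m \<beta>) * Poly_Mapping.lookup f m"
      by (simp only: pascal) (simp add: algebra_simps)
    finally show ?thesis
      by (simp add: lookup_dpow km)
  qed
  then show "Poly_Mapping.lookup (mad i (dpow (\<beta> + Poly_Mapping.single i 1)) f) k =
      Poly_Mapping.lookup (dpow \<beta> f) k"
    by (simp only: e_def)
qed

lemma mad_dpow_eq_0:
  fixes \<beta> :: "'n::finite \<Rightarrow>\<^sub>0 nat"
  assumes "Poly_Mapping.lookup \<beta> i = 0"
  shows "mad i (dpow \<beta> :: ('n, 'k::field) op) = (\<lambda>f. 0)"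
proof (intro ext poly_mapping_eqI)
  fix f :: "('n, 'k) pn" and k
  define e :: "'n \<Rightarrow>\<^sub>0 nat" where "e = Poly_Mapping.single i 1"
  have var_e: "Poly_Mapping.lookup (var i * g) (m + e) = Poly_Mapping.lookup g m" for g :: "('n, 'k) pn" and m
    unfolding e_def by (rule lookup_var_mult_add)
  have pascal: "mbinom (m + e) \<beta> = mbinom m \<beta>" for m
    using mbinom_add_single[of m i \<beta>] assms by (simp add: e_def)
  have "Poly_Mapping.lookup (mad i (dpow \<beta>) f) k = 0"
  proof (cases "Poly_Mapping.lookup k i = 0")
    case True
    then show ?thesis
      using assms by (simp add: mad_def lookup_minus lookup_dpow lookup_var_mult_eq_0 lookup_add)
  next
    case False
    define k' where "k' = k - e"
    have k: "k = k' + e"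
      unfolding k'_def e_def by (rule poly_mapping_eq_diff_single_add[OF False])
    have "k + \<beta> = (k' + \<beta>) + e"
      by (simp add: k ac_simps)
    then show ?thesis
      by (simp add: mad_def lookup_minus lookup_dpow k pascal var_e)
  qed
  then show "Poly_Mapping.lookup (mad i (dpow \<beta>) f) k = Poly_Mapping.lookup 0 k"
    by simp
qed

lemma funpow_mad_zero: "(mad i ^^ n) (\<lambda>f. 0) = (\<lambda>f. 0)"
  by (induction n) (simp_all add: mad_def)

lemma funpow_mad_dpow:
  fixes \<beta> :: "'n::finite \<Rightarrow>\<^sub>0 nat"
  shows "(mad i ^^ n) (dpow \<beta> :: ('n, 'k::field) op) =
    (if n \<le> Poly_Mapping.lookup \<beta> i then dpow (\<beta> - Poly_Mapping.single i n) else (\<lambda>f. 0))"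
proof (induction n)
  case 0
  then show ?case by simp
next
  case (Suc n)
  consider "Suc n \<le> Poly_Mapping.lookup \<beta> i" | "n = Poly_Mapping.lookup \<beta> i"
    | "Poly_Mapping.lookup \<beta> i < n"
    by linarith
  then show ?case
  proof cases
    case 1
    have eq: "\<beta> - Poly_Mapping.single i n = (\<beta> - Poly_Mapping.single i (Suc n)) + Poly_Mapping.single i 1"
      using 1 by (auto simp: poly_mapping_eq_iff fun_eq_iff lookup_add lookup_minus lookup_single when_def)
    have "(mad i ^^ Suc n) (dpow \<beta> :: ('n, 'k) op) = mad i (dpow (\<beta> - Poly_Mapping.single i n))"
      using 1 Suc by simp
    also have "\<dots> = dpow (\<beta> - Poly_Mapping.single i (Suc n))"
      unfolding eq by (rule mad_dpow_add_single)
    finally show ?thesis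
      using 1 by simp
  next
    case 2
    then show ?thesis
      using Suc by (simp add: mad_dpow_eq_0 lookup_minus)
  next
    case 3
    then show ?thesis
      using Suc by (simp add: mad_def)
  qed
qed

lemma distinct_var_list: "distinct (var_list :: 'n::finite list)"
  and set_var_list: "set (var_list :: 'n::finite list) = UNIV"
proof -
  have "\<exists>xs :: 'n list. distinct xs \<and> set xs = UNIV"
    using finite_distinct_list[of "UNIV :: 'n set"] by auto
  then have "distinct (var_list :: 'n list) \<and> set (var_list :: 'n list) = UNIV"
    unfolding var_list_def by (rule someI_ex)
  then show "distinct (var_list :: 'n list)" "set (var_list :: 'n list) = UNIV"
    by simp_all
qed

lemma foldr_funpow_mad_dpow:
  fixes \<beta> :: "'n::finite \<Rightarrow>\<^sub>0 nat"
  assumes "distinct xs"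
  shows "foldr (\<lambda>i g. (mad i ^^ Poly_Mapping.lookup \<alpha> i) \<circ> g) xs id (dpow \<beta> :: ('n, 'k::field) op) =
    (if \<forall>i\<in>set xs. Poly_Mapping.lookup \<alpha> i \<le> Poly_Mapping.lookup \<beta> i
     then dpow (\<beta> - (\<Sum>i\<in>set xs. Poly_Mapping.single i (Poly_Mapping.lookup \<alpha> i))) else (\<lambda>f. 0))"
  using assms
proof (induction xs)
  case Nil
  then show ?case by simp
next
  case (Cons j xs)
  define \<gamma> where "\<gamma> = (\<Sum>i\<in>set xs. Poly_Mapping.single i (Poly_Mapping.lookup \<alpha> i))"
  have j: "j \<notin> set xs" "distinct xs"
    using Cons.prems by simp_all
  have lookup_\<gamma>: "Poly_Mapping.lookup \<gamma> x = (if x \<in> set xs then Poly_Mapping.lookup \<alpha> x else 0)" for x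
    by (simp add: \<gamma>_def lookup_sum lookup_single when_def)
  have "\<beta> - \<gamma> - Poly_Mapping.single j (Poly_Mapping.lookup \<alpha> j) =
      \<beta> - (\<Sum>i\<in>set (j # xs). Poly_Mapping.single i (Poly_Mapping.lookup \<alpha> i))"
    using j by (auto simp: \<gamma>_def[symmetric] poly_mapping_eq_iff fun_eq_iff lookup_minus lookup_add
        lookup_\<gamma> lookup_single when_def)
  moreover have "Poly_Mapping.lookup (\<beta> - \<gamma>) j = Poly_Mapping.lookup \<beta> j"
    using j by (simp add: lookup_minus lookup_\<gamma>)
  ultimately show ?case
    using Cons.IH[OF j(2)] by (simp add: \<gamma>_def[symmetric] funpow_mad_dpow funpow_mad_zero)
qed

lemma mad_pow_dpow:
  fixes \<beta> :: "'n::finite \<Rightarrow>\<^sub>0 nat"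
  shows "mad_pow \<alpha> (dpow \<beta> :: ('n, 'k::field) op) = yshift dpow \<beta> \<alpha>"
proof -
  have "(\<Sum>i\<in>UNIV. Poly_Mapping.single i (Poly_Mapping.lookup \<alpha> i)) = \<alpha>"
    by (rule poly_mapping_eqI) (simp add: lookup_sum lookup_single when_def)
  then show ?thesis
    unfolding mad_pow_def yshift_def
    by (simp add: foldr_funpow_mad_dpow distinct_var_list set_var_list mle_def)
qed

lemma mad_pow_single: "mad_pow (Poly_Mapping.single i 1) = (mad i :: ('n::finite, 'k::field) op \<Rightarrow> _)"
proof -
  have "foldr (\<lambda>j g. (mad j ^^ Poly_Mapping.lookup (Poly_Mapping.single i 1) j) \<circ> g) xs id =
      (if i \<in> set xs then mad i :: ('n, 'k) op \<Rightarrow> _ else id)" if "distinct xs" for xs :: "'n list"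
    using that by (induction xs) (auto simp: lookup_single when_def)
  from this[OF distinct_var_list] show ?thesis
    unfolding mad_pow_def by (simp add: set_var_list)
qed

lemma iter_descent_dpow: "iter_descent (dpow :: ('n::finite \<Rightarrow>\<^sub>0 nat) \<Rightarrow> ('n, 'k::field) op)"
  unfolding iter_descent_def
  by (simp add: dpow_in_Dops dpow_0 mad_pow_dpow fun_eq_iff dpow_dpow)

lemma Dops_add:
  assumes "T \<in> Dops"
  shows "T (f + g) = T f + T g"
  using assms unfolding Dops_def by (auto simp: dpow_add distrib_left sum.distrib)

lemma Dops_single_0_mult:
  assumes "T \<in> Dops"
  shows "T (Poly_Mapping.single 0 a * f) = Poly_Mapping.single 0 a * T f"
  using assms unfolding Dops_def
  by (auto simp: dpow_single_0_mult sum_distrib_left mult.left_commute)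

lemma Dops_of_nat_mult:
  assumes "T \<in> Dops"
  shows "T (of_nat n * f) = of_nat n * T f"
  using Dops_single_0_mult[OF assms, of "of_nat n" f] by simp

lemma op_eq_mult_if_commutes_with_var:
  fixes z :: "('n::finite, 'k::field) op"
  assumes add: "\<And>f g. z (f + g) = z f + z g"
    and const: "\<And>a f. z (Poly_Mapping.single 0 a * f) = Poly_Mapping.single 0 a * z f"
    and var: "\<And>i f. z (var i * f) = var i * z f"
  shows "z f = z 1 * f"
proof -
  have monomial: "z (Poly_Mapping.single m a) = z 1 * Poly_Mapping.single m a" for m a
  proof (induction "sum (Poly_Mapping.lookup m) UNIV" arbitrary: m rule: less_induct)
    case less
    show ?case
    proof (cases "m = 0")
      case True
      then show ?thesis
        using const[of a 1] by (simp add: mult.commute)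
    next
      case False
      then obtain i where "Poly_Mapping.lookup m i \<noteq> 0"
        by (metis lookup_zero poly_mapping_eqI)
      define m' where "m' = m - Poly_Mapping.single i 1"
      have m: "m = m' + Poly_Mapping.single i 1"
        unfolding m'_def by (rule poly_mapping_eq_diff_single_add) fact
      have "Poly_Mapping.single m a = var i * Poly_Mapping.single m' a"
        unfolding var_def by (simp add: mult_single m add.commute)
      moreover have "z (Poly_Mapping.single m' a) = z 1 * Poly_Mapping.single m' a"
        by (rule less) (unfold m sum_lookup_add_single, simp)
      ultimately show ?thesis
        by (simp add: var ac_simps)
    qed
  qed
  have z0: "z 0 = 0"
    using add[of 0 0] by simp
  have "z (sum h S) = (\<Sum>x\<in>S. z (h x))" if "finite S" for h :: "('n \<Rightarrow>\<^sub>0 nat) \<Rightarrow> ('n, 'k) pn" and S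
    using that by (induction S rule: finite_induct) (simp_all add: add z0)
  then have "z f = (\<Sum>m\<in>Poly_Mapping.keys f. z 1 * Poly_Mapping.single m (Poly_Mapping.lookup f m))"
    by (subst poly_mapping_eq_sum_single) (simp add: monomial)
  also have "\<dots> = z 1 * f"
    by (subst (2) poly_mapping_eq_sum_single) (simp add: sum_distrib_left)
  finally show ?thesis .
qed

lemma iter_descentD:
  assumes "iter_descent y"
  shows "y \<alpha> \<in> Dops" and "y 0 = id"
    and "y \<alpha> (y \<beta> f) = of_nat (mbinom (\<alpha> + \<beta>) \<beta>) * y (\<alpha> + \<beta>) f"
    and "mad_pow \<alpha> (y \<beta>) = yshift y \<beta> \<alpha>"
  using assms unfolding iter_descent_def by (auto simp: fun_eq_iff)

lemma iter_descent_funpow: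
  assumes "iter_descent y"
  shows "\<exists>N \<gamma>. (\<forall>i. Poly_Mapping.lookup \<gamma> i = k * Poly_Mapping.lookup \<beta> i) \<and>
    (\<forall>g. (y \<beta> ^^ k) g = of_nat N * y \<gamma> g)"
proof (induction k)
  case 0
  show ?case
    by (rule exI[of _ 1], rule exI[of _ 0]) (simp add: iter_descentD(2)[OF assms])
next
  case (Suc k)
  then obtain N \<gamma> where \<gamma>: "\<And>i. Poly_Mapping.lookup \<gamma> i = k * Poly_Mapping.lookup \<beta> i"
    and N: "\<And>g. (y \<beta> ^^ k) g = of_nat N * y \<gamma> g"
    by blast
  have "(y \<beta> ^^ Suc k) g = of_nat (N * mbinom (\<beta> + \<gamma>) \<gamma>) * y (\<beta> + \<gamma>) g" for g
    by (simp add: N Dops_of_nat_mult iter_descentD[OF assms])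
  moreover have "Poly_Mapping.lookup (\<beta> + \<gamma>) i = Suc k * Poly_Mapping.lookup \<beta> i" for i
    by (simp add: lookup_add \<gamma>)
  ultimately show ?case
    by blast
qed

text \<open>With p = k + 1, (y^[\<beta>])^p = N \<cdot> binom(\<beta> + k\<beta>, k\<beta>) \<cdot> y^[p\<beta>] for some N; at a coordinate
  where b = \<beta>_j > 0 the multi-binomial coefficient has the factor binom(pb, b), which p divides.\<close>

lemma iter_descent_funpow_CHAR_eq_0:
  fixes y :: "('n::finite \<Rightarrow>\<^sub>0 nat) \<Rightarrow> ('n, 'k::field) op"
  assumes y: "iter_descent y" and "CHAR('k) > 0" and "\<beta> \<noteq> 0"
  shows "(y \<beta> ^^ CHAR('k)) g = 0"
proof -
  obtain k where k: "CHAR('k) = Suc k"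
    using assms(2) by (cases "CHAR('k)") auto
  obtain N \<gamma> where \<gamma>: "\<And>i. Poly_Mapping.lookup \<gamma> i = k * Poly_Mapping.lookup \<beta> i"
    and N: "\<And>g. (y \<beta> ^^ k) g = of_nat N * y \<gamma> g"
    using iter_descent_funpow[OF y] by blast
  obtain j where "Poly_Mapping.lookup \<beta> j \<noteq> 0"
    using assms(3) by (metis lookup_zero poly_mapping_eqI)
  then have "CHAR('k) dvd (CHAR('k) * Poly_Mapping.lookup \<beta> j choose Poly_Mapping.lookup \<beta> j)"
    by (simp add: dvd_choose_mult)
  also have "\<dots> = (Poly_Mapping.lookup (\<beta> + \<gamma>) j choose Poly_Mapping.lookup \<gamma> j)"
    using binomial_symmetric[of "Poly_Mapping.lookup \<beta> j" "CHAR('k) * Poly_Mapping.lookup \<beta> j"]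
    by (simp add: lookup_add \<gamma> k)
  also have "\<dots> dvd mbinom (\<beta> + \<gamma>) \<gamma>"
    unfolding mbinom_def by (rule dvd_prodI) simp_all
  finally have "(of_nat (mbinom (\<beta> + \<gamma>) \<gamma>) :: ('n, 'k) pn) = 0"
    by (metis of_nat_eq_0_iff_char_dvd single_of_nat single_zero)
  then show ?thesis
    by (simp add: k N Dops_of_nat_mult iter_descentD[OF y])
qed

text \<open>Exponents read as base-N digits: additive, and injective on monomials whose exponents are
  all below N.\<close>

primrec horner_weight :: "'n list \<Rightarrow> nat \<Rightarrow> ('n \<Rightarrow>\<^sub>0 nat) \<Rightarrow> nat" where
  "horner_weight [] N m = 0"
| "horner_weight (i # xs) N m = Poly_Mapping.lookup m i + N * horner_weight xs N m"

lemma horner_weight_add: "horner_weight xs N (a + b) = horner_weight xs N a + horner_weight xs N b"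
  by (induction xs) (simp_all add: lookup_add algebra_simps)

lemma horner_weight_inj:
  assumes "\<forall>i\<in>set xs. Poly_Mapping.lookup a i < N" "\<forall>i\<in>set xs. Poly_Mapping.lookup b i < N"
    and "horner_weight xs N a = horner_weight xs N b"
  shows "\<forall>i\<in>set xs. Poly_Mapping.lookup a i = Poly_Mapping.lookup b i"
  using assms
proof (induction xs)
  case Nil
  then show ?case by simp
next
  case (Cons j xs)
  have eq: "Poly_Mapping.lookup a j + N * horner_weight xs N a = Poly_Mapping.lookup b j + N * horner_weight xs N b"
    using Cons.prems(3) by simp
  have "Poly_Mapping.lookup a j = (Poly_Mapping.lookup a j + N * horner_weight xs N a) mod N"
    using Cons.prems(1) by simp
  also have "\<dots> = (Poly_Mapping.lookup b j + N * horner_weight xs N b) mod N"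
    by (simp only: eq)
  also have "\<dots> = Poly_Mapping.lookup b j"
    using Cons.prems(2) by simp
  finally have j: "Poly_Mapping.lookup a j = Poly_Mapping.lookup b j" .
  moreover have "0 < N"
    using Cons.prems(1) by auto
  ultimately have "horner_weight xs N a = horner_weight xs N b"
    using eq by simp
  then show ?case
    using Cons j by simp
qed

lemma horner_weight_pos:
  assumes "1 \<le> N" "i \<in> set xs" "Poly_Mapping.lookup a i \<noteq> 0"
  shows "0 < horner_weight xs N a"
  using assms by (induction xs) auto

lemma obtain_additive_weight:
  fixes S :: "('n::finite \<Rightarrow>\<^sub>0 nat) set"
  assumes "finite S"
  obtains w :: "('n \<Rightarrow>\<^sub>0 nat) \<Rightarrow> nat"
  where "\<And>a b. w (a + b) = w a + w b" and "inj_on w S" and "\<And>\<beta>. \<beta> \<noteq> 0 \<Longrightarrow> 0 < w \<beta>"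
proof
  define N where "N = Suc (Max ((\<lambda>(m, i). Poly_Mapping.lookup m i) ` (S \<times> UNIV)))"
  have digit: "Poly_Mapping.lookup m i < N" if "m \<in> S" for m i
    using that assms by (auto simp: N_def less_Suc_eq_le intro!: Max_ge)
  let ?w = "horner_weight (var_list :: 'n list) N"
  show "?w (a + b) = ?w a + ?w b" for a b
    by (rule horner_weight_add)
  show "inj_on ?w S"
    using horner_weight_inj[of var_list _ N] digit
    by (auto intro!: inj_onI poly_mapping_eqI simp: set_var_list)
  show "0 < ?w \<beta>" if \<beta>: "\<beta> \<noteq> 0" for \<beta>
  proof -
    obtain i where "Poly_Mapping.lookup \<beta> i \<noteq> 0"
      using \<beta> by (metis lookup_zero poly_mapping_eqI)
    then show ?thesis
      by (intro horner_weight_pos[of N i]) (simp_all add: N_def set_var_list)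
  qed
qed

lemma lookup_mult_max_weight:
  fixes c g :: "('n \<Rightarrow>\<^sub>0 nat) \<Rightarrow>\<^sub>0 'k::comm_semiring_1"
    and w :: "('n \<Rightarrow>\<^sub>0 nat) \<Rightarrow> nat"
  assumes w: "\<And>a b. w (a + b) = w a + w b"
    and m0: "m0 \<in> Poly_Mapping.keys c" "\<And>a. a \<in> Poly_Mapping.keys c \<Longrightarrow> a \<noteq> m0 \<Longrightarrow> w a < w m0"
    and g: "\<And>m. m \<in> Poly_Mapping.keys g \<Longrightarrow> w m \<le> w q"
  shows "Poly_Mapping.lookup (c * g) (m0 + q) = Poly_Mapping.lookup c m0 * Poly_Mapping.lookup g q"
proof -
  have other: "Poly_Mapping.lookup (Poly_Mapping.single a (Poly_Mapping.lookup c a) * g) (m0 + q) = 0"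
    if a: "a \<in> Poly_Mapping.keys c" "a \<noteq> m0" for a
  proof (cases "\<exists>q'. m0 + q = a + q'")
    case True
    then obtain q' where q': "m0 + q = a + q'"
      by blast
    have "w q < w q'"
      using m0(2)[OF a] arg_cong[OF q', of w] unfolding w by linarith
    then have "Poly_Mapping.lookup g q' = 0"
      using g by (meson in_keys_iff leD)
    then show ?thesis
      by (simp add: q' lookup_single_mult_add)
  next
    case False
    then show ?thesis
      by (intro lookup_single_mult_eq_0) blast
  qed
  have "Poly_Mapping.lookup (c * g) (m0 + q) =
      (\<Sum>a\<in>Poly_Mapping.keys c. Poly_Mapping.lookup (Poly_Mapping.single a (Poly_Mapping.lookup c a) * g) (m0 + q))"
    by (subst poly_mapping_eq_sum_single[of c]) (simp add: sum_distrib_right lookup_sum)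
  also have "\<dots> = Poly_Mapping.lookup (Poly_Mapping.single m0 (Poly_Mapping.lookup c m0) * g) (m0 + q)"
    using other by (simp add: sum.remove[OF _ m0(1)])
  finally show ?thesis
    by (simp add: lookup_single_mult_add)
qed

text \<open>If m0 is the monomial of c of largest weight, the coefficient of k m0 in the k-th iterate
  is c_m0^k: only the leading term of c can reach that weight, since \<partial>^[\<beta>] lowers weight
  by w \<beta> > 0.\<close>

lemma funpow_dpow_plus_mult_max_weight:
  fixes c :: "('n::finite, 'k::field) pn" and w :: "('n \<Rightarrow>\<^sub>0 nat) \<Rightarrow> nat"
  assumes w: "\<And>a b. w (a + b) = w a + w b" and w\<beta>: "0 < w \<beta>"
    and m0: "m0 \<in> Poly_Mapping.keys c" "\<And>a. a \<in> Poly_Mapping.keys c \<Longrightarrow> a \<noteq> m0 \<Longrightarrow> w a < w m0"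
  defines "T \<equiv> \<lambda>g. dpow \<beta> g + c * g"
  shows "(\<forall>m\<in>Poly_Mapping.keys ((T ^^ k) 1). w m \<le> k * w m0) \<and>
    (\<exists>q. w q = k * w m0 \<and> Poly_Mapping.lookup ((T ^^ k) 1) q = Poly_Mapping.lookup c m0 ^ k)"
proof (induction k)
  case 0
  show ?case
    by (auto intro!: exI[of _ 0] simp: lookup_one w[of 0 0, simplified])
next
  case (Suc k)
  define g where "g = (T ^^ k) 1"
  obtain q where bound: "\<And>m. m \<in> Poly_Mapping.keys g \<Longrightarrow> w m \<le> k * w m0"
    and q: "w q = k * w m0" "Poly_Mapping.lookup g q = Poly_Mapping.lookup c m0 ^ k"
    using Suc by (auto simp: g_def)
  have step: "(T ^^ Suc k) 1 = dpow \<beta> g + c * g"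
    by (simp add: T_def g_def)
  have "w a \<le> w m0" if "a \<in> Poly_Mapping.keys c" for a
    using m0(2)[OF that] by (cases "a = m0") auto
  then have "w m \<le> Suc k * w m0" if "m \<in> Poly_Mapping.keys (c * g)" for m
    using that keys_mult[of c g] bound by (fastforce simp: w)
  moreover have "w m \<le> Suc k * w m0" if "m \<in> Poly_Mapping.keys (dpow \<beta> g)" for m
    using that bound[of "m + \<beta>"] by (auto simp: in_keys_iff lookup_dpow w)
  ultimately have "\<forall>m\<in>Poly_Mapping.keys (dpow \<beta> g + c * g). w m \<le> Suc k * w m0"
    using keys_add[of "dpow \<beta> g" "c * g"] by blast
  moreover have "Poly_Mapping.lookup (dpow \<beta> g) (m0 + q) = 0"
    using bound[of "m0 + q + \<beta>"] w\<beta> by (auto simp: lookup_dpow in_keys_iff w q)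
  moreover have "Poly_Mapping.lookup (c * g) (m0 + q) = Poly_Mapping.lookup c m0 ^ Suc k"
    using lookup_mult_max_weight[OF w m0, of g q] bound by (simp add: q)
  ultimately show ?case
    unfolding step by (intro conjI exI[of _ "m0 + q"]) (simp_all add: lookup_add w q)
qed

lemma funpow_dpow_plus_mult_one_neq_0:
  fixes c :: "('n::finite, 'k::field) pn"
  assumes "c \<noteq> 0" and "\<beta> \<noteq> 0"
  shows "((\<lambda>g. dpow \<beta> g + c * g) ^^ k) 1 \<noteq> 0"
proof -
  obtain w :: "('n \<Rightarrow>\<^sub>0 nat) \<Rightarrow> nat" where w: "\<And>a b. w (a + b) = w a + w b"
    and inj: "inj_on w (Poly_Mapping.keys c)" and pos: "\<And>\<beta>. \<beta> \<noteq> 0 \<Longrightarrow> 0 < w \<beta>"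
    using obtain_additive_weight[OF finite_keys[of c]] by blast
  have "Max (w ` Poly_Mapping.keys c) \<in> w ` Poly_Mapping.keys c"
    using assms(1) by (intro Max_in) auto
  then obtain m0 where m0: "m0 \<in> Poly_Mapping.keys c" "w m0 = Max (w ` Poly_Mapping.keys c)"
    by auto
  have "w a < w m0" if "a \<in> Poly_Mapping.keys c" "a \<noteq> m0" for a
  proof -
    have "w a \<le> w m0"
      using that(1) by (simp add: m0(2))
    then show ?thesis
      using inj_onD[OF inj _ that(1) m0(1)] that(2) by fastforce
  qed
  from funpow_dpow_plus_mult_max_weight[OF w pos[OF assms(2)] m0(1) this, of k]
  show ?thesis
    using m0(1) by (auto simp: in_keys_iff)
qed

lemma iter_descent_eq_dpow_if_mad_eq:
  fixes y :: "('n::finite \<Rightarrow>\<^sub>0 nat) \<Rightarrow> ('n, 'k::field) op"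
  assumes y: "iter_descent y" and char: "CHAR('k) > 0"
    and mad: "\<And>i. mad i (y \<beta>) = mad i (dpow \<beta>)"
  shows "y \<beta> = dpow \<beta>"
proof (cases "\<beta> = 0")
  case True
  then show ?thesis
    using iter_descentD(2)[OF y] by (simp add: dpow_0)
next
  case False
  define z where "z f = y \<beta> f - dpow \<beta> f" for f
  have "z f = z 1 * f" for f
  proof (rule op_eq_mult_if_commutes_with_var)
    show "z (f + g) = z f + z g" for f g
      by (simp add: z_def Dops_add dpow_in_Dops iter_descentD(1)[OF y])
    show "z (Poly_Mapping.single 0 a * f) = Poly_Mapping.single 0 a * z f" for a f
      by (simp add: z_def Dops_single_0_mult dpow_in_Dops iter_descentD(1)[OF y] right_diff_distrib)
    show "z (var i * f) = var i * z f" for i f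
      using fun_cong[OF mad[of i], of f] by (simp add: z_def mad_def algebra_simps)
  qed
  then have y_eq: "y \<beta> = (\<lambda>g. dpow \<beta> g + z 1 * g)"
    by (auto simp: fun_eq_iff z_def algebra_simps)
  have "z 1 = 0"
  proof (rule ccontr)
    assume "z 1 \<noteq> 0"
    then have "(y \<beta> ^^ CHAR('k)) 1 \<noteq> 0"
      unfolding y_eq by (rule funpow_dpow_plus_mult_one_neq_0[OF _ False])
    then show False
      using iter_descent_funpow_CHAR_eq_0[OF y char False] by simp
  qed
  then show ?thesis
    using y_eq by (simp add: fun_eq_iff)
qed

lemma iter_descent_unique:
  fixes y :: "('n::finite \<Rightarrow>\<^sub>0 nat) \<Rightarrow> ('n, 'k::field) op"
  assumes y: "iter_descent y" and char: "CHAR('k) > 0"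
  shows "y = dpow"
proof
  fix \<beta>
  show "y \<beta> = dpow \<beta>"
  proof (induction "sum (Poly_Mapping.lookup \<beta>) UNIV" arbitrary: \<beta> rule: less_induct)
    case less
    have "mad i (y \<beta>) = mad i (dpow \<beta>)" for i
    proof -
      have "y (\<beta> - Poly_Mapping.single i 1) = dpow (\<beta> - Poly_Mapping.single i 1)"
        if "mle (Poly_Mapping.single i 1) \<beta>"
      proof (rule less)
        have "Poly_Mapping.lookup \<beta> i \<noteq> 0"
          using that by (auto simp: mle_def dest: spec[of _ i])
        then show "sum (Poly_Mapping.lookup (\<beta> - Poly_Mapping.single i 1)) UNIV
            < sum (Poly_Mapping.lookup \<beta>) UNIV"
          by (subst (2) poly_mapping_eq_diff_single_add[of \<beta> i]) (simp_all only: sum_lookup_add_single, simp)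
      qed
      then show ?thesis
        using iter_descentD(4)[OF y, of "Poly_Mapping.single i 1" \<beta>, unfolded mad_pow_single]
          mad_pow_dpow[where 'k='k, of "Poly_Mapping.single i 1" \<beta>, unfolded mad_pow_single]
        by (simp add: yshift_def)
    qed
    then show ?case
      by (rule iter_descent_eq_dpow_if_mad_eq[OF y char])
  qed
qed

theorem theorem3p1:
  assumes "CHAR('k::field) > 0"
  shows "iter_descent (dpow :: ('n::finite \<Rightarrow>\<^sub>0 nat) \<Rightarrow> ('n, 'k) op)
     \<and> (\<forall>y :: ('n \<Rightarrow>\<^sub>0 nat) \<Rightarrow> ('n, 'k) op. iter_descent y \<longrightarrow> y = dpow)"
  using iter_descent_dpow iter_descent_unique[OF _ assms] by blast

end
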